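(* Let $T$ be an observation table, let $(\equiv,f)$ be a merging map on $T$ of minimal size (i.e. no merging map on $T$ has strictly smaller size), and let $\mathcal{M}$ be the transducer resulting from $(\equiv,f)$. Then $\mathcal{M}$ is compatible with $T$.
   Context: Transducers. A (subsequential string) transducer is a tuple $\mathcal{M}=(\Sigma,\Gamma,Q,q_0,w_0,\delta,\delta_F)$ with finite input alphabet $\Sigma$, finite output alphabet $\Gamma$, finite state set $Q$, initial state $q_0$, initial production $w_0\in\Gamma^*$, partial transition function $\delta:Q\times\Sigma\to Q\times\Gamma^*$ (write $q\xrightarrow{a|w}q'$ when $\delta(q,a)=(q',w)$) and partial final function $\delta_F:Q\to\Gamma^*$ ($q$ is final if $\delta_F(q)$ is defined). Runs are extended to words: $q\xrightarrow{\varepsilon|\varepsilon}{}^*q$, and if $q\xrightarrow{u|w}{}^*q'$ and $q'\xrightarrow{a|w'}q''$ then $q\xrightarrow{ua|ww'}{}^*q''$. The function $\llbracket\mathcal{M}\rrbracket:\Sigma^*\to\Gamma^*$ (partial) is $\llbracket\mathcal{M}\rrbracket(u)=w_0\,w\,\delta_F(q)$ if $q_0\xrightarrow{u|w}{}^*q$ with $q$ final, and undefined otherwise; $\mathrm{dom}$ denotes its domain. The size $|\mathcal{M}|$ is the number of states. Observation tables. Let $P\subseteq\Sigma^*$ be finite and prefix-closed and $S\subseteq\Sigma^*$ finite and suffix-closed, and let $D=(P\cup P\Sigma)\cdot S$. An observation table is a function $T:D\to\Gamma^*\cup\{\#,\bot\}$ (in the learning setting, for a target partial function $\tau$ and a language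 $\mathit{Up}\supseteq\mathrm{dom}(\tau)$: $T(x)=\#$ if $x\notin\mathit{Up}$, $T(x)=\bot$ if $x\in\mathit{Up}\setminus\mathrm{dom}(\tau)$, $T(x)=\tau(x)$ otherwise). By convention $T(x)=\#$ for $x\notin D$. Let $P_T$ be the set of all prefixes of elements of $D$, and $P_\Gamma=\{u\in P_T:\exists v\in\Sigma^*,\ T(uv)\in\Gamma^*\}$. A transducer $\mathcal{M}$ is compatible with $T$ if for all $x\in D$: $T(x)\in\Gamma^*$ implies $\llbracket\mathcal{M}\rrbracket(x)=T(x)$, and $T(x)=\bot$ implies $x\notin\mathrm{dom}(\llbracket\mathcal{M}\rrbracket)$. For words $x,y$ with $x$ a prefix of $y$, $x^{-1}y$ denotes the word $z$ with $xz=y$. Merging maps. A merging map on $T$ is a pair $(\equiv,f)$ where $\equiv$ is an equivalence relation on $P_T$ and $f$ is a partial function $P_T\to\Gamma^*$ such that for all $u,u'\in P_T$ and $a\in\Sigma$: 1. if $f(u)$ is undefined then ($u\equiv u'$ iff $f(u')$ is undefined); 2. if $T(uv)\in\Gamma^*$ for some $v\in\Sigma^*$, then $f(u)$ is defined and is a prefix of $T(uv)$; 3. if $f(ua)$ is defined then $f(u)$ is defined and is a prefix of $f(ua)$; 4. if $f(u)$ is defined, $u\equiv u'$ and $ua,u'a\in P_T$, then $ua\equiv u'a$, and if moreover $f(ua)$ is defined then $f(u)^{-1}f(ua)=f(u')^{-1}f(u'a)$; 5. if $T(u)\in\Gamma^*$ and $u\equiv u'$ then $T(u')\neq\bot$,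 and if moreover $T(u')\in\Gamma^*$ then $f(u)^{-1}T(u)=f(u')^{-1}T(u')$; 6. if $f(ua)$ is defined and there is no $v\in P_T$ with $v\equiv u$ and $va\in P_\Gamma$, then $f(ua)=f(u)$. The size of $(\equiv,f)$ is the number of $\equiv$-classes contained in $\mathrm{dom}(f)$. Resulting transducer. The transducer resulting from a merging map $(\equiv,f)$ has as states the $\equiv$-classes of elements of $\mathrm{dom}(f)$ (write $q_u$ for the class of $u$), initial state $q_\varepsilon$, initial production $f(\varepsilon)$, transitions $q_u\xrightarrow{a|f(u)^{-1}f(ua)}q_{ua}$ for all $u,ua\in\mathrm{dom}(f)$, and final outputs $\delta_F(q_u)=f(u)^{-1}T(u)$ for every $u\in P_T$ with $T(u)\in\Gamma^*$. *)

theory Defs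
  imports Main "HOL-Library.Sublist"
begin

datatype 'b tval = Out "'b list" | Hash | Bot

(* left quotient x^{-1} y, meaningful when x is a prefix of y *)
definition lquot :: "'b list \<Rightarrow> 'b list \<Rightarrow> 'b list" where
  "lquot x y = drop (length x) y"

definition tdom :: "'a list set \<Rightarrow> 'a list set \<Rightarrow> 'a list set" where
  "tdom P S = {u @ s | u s. (u \<in> P \<or> (\<exists>p a. p \<in> P \<and> u = p @ [a])) \<and> s \<in> S}"

definition obs_table :: "'a list set \<Rightarrow> 'a list set \<Rightarrow> ('a list \<Rightarrow> 'b tval) \<Rightarrow> bool" where
  "obs_table P S T \<longleftrightarrow> finite P \<and> finite S
     \<and> (\<forall>u v. u @ v \<in> P \<longrightarrow> u \<in> P)
     \<and> (\<forall>u v. u @ v \<in> S \<longrightarrow> v \<in> S)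
     \<and> (\<forall>x. x \<notin> tdom P S \<longrightarrow> T x = Hash)"

definition PT :: "'a list set \<Rightarrow> 'a list set \<Rightarrow> 'a list set" where
  "PT P S = {u. \<exists>v. u @ v \<in> tdom P S}"

definition PGamma :: "'a list set \<Rightarrow> 'a list set \<Rightarrow> ('a list \<Rightarrow> 'b tval) \<Rightarrow> 'a list set" where
  "PGamma P S T = {u \<in> PT P S. \<exists>v w. T (u @ v) = Out w}"

definition merging_map ::
  "'a list set \<Rightarrow> 'a list set \<Rightarrow> ('a list \<Rightarrow> 'b tval)
     \<Rightarrow> ('a list \<times> 'a list) set \<Rightarrow> ('a list \<Rightarrow> 'b list option) \<Rightarrow> bool" where
  "merging_map P S T R f \<longleftrightarrow>
     equiv (PT P S) R \<and> dom f \<subseteq> PT P S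
   \<and> (\<forall>u\<in>PT P S. \<forall>u'\<in>PT P S. f u = None \<longrightarrow> ((u, u') \<in> R \<longleftrightarrow> f u' = None))
   \<and> (\<forall>u\<in>PT P S. \<forall>v w. T (u @ v) = Out w \<longrightarrow> (\<exists>y. f u = Some y \<and> prefix y w))
   \<and> (\<forall>u\<in>PT P S. \<forall>a. f (u @ [a]) \<noteq> None \<longrightarrow>
        (\<exists>y. f u = Some y \<and> prefix y (the (f (u @ [a])))))
   \<and> (\<forall>u\<in>PT P S. \<forall>u'\<in>PT P S. \<forall>a. f u \<noteq> None \<and> (u, u') \<in> R
        \<and> u @ [a] \<in> PT P S \<and> u' @ [a] \<in> PT P S \<longrightarrow>
        (u @ [a], u' @ [a]) \<in> R
        \<and> (f (u @ [a]) \<noteq> None \<longrightarrow>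
             lquot (the (f u)) (the (f (u @ [a]))) = lquot (the (f u')) (the (f (u' @ [a])))))
   \<and> (\<forall>u\<in>PT P S. \<forall>u'\<in>PT P S. \<forall>w. T u = Out w \<and> (u, u') \<in> R \<longrightarrow>
        T u' \<noteq> Bot \<and> (\<forall>w'. T u' = Out w' \<longrightarrow> lquot (the (f u)) w = lquot (the (f u')) w'))
   \<and> (\<forall>u\<in>PT P S. \<forall>a. f (u @ [a]) \<noteq> None
        \<and> \<not> (\<exists>v\<in>PT P S. (v, u) \<in> R \<and> v @ [a] \<in> PGamma P S T) \<longrightarrow> f (u @ [a]) = f u)"

definition mm_size ::
  "'a list set \<Rightarrow> 'a list set \<Rightarrow> ('a list \<times> 'a list) set \<Rightarrow> ('a list \<Rightarrow> 'b list option) \<Rightarrow> nat" where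
  "mm_size P S R f = card {C \<in> PT P S // R. C \<subseteq> dom f}"

record ('s, 'a, 'b) transducer =
  states :: "'s set"
  init :: 's
  init_out :: "'b list"
  trans :: "'s \<Rightarrow> 'a \<Rightarrow> ('s \<times> 'b list) option"
  final :: "'s \<Rightarrow> 'b list option"

fun run :: "('s \<Rightarrow> 'a \<Rightarrow> ('s \<times> 'b list) option) \<Rightarrow> 's \<Rightarrow> 'a list \<Rightarrow> ('s \<times> 'b list) option" where
  "run d q [] = Some (q, [])"
| "run d q (a # u) = (case d q a of None \<Rightarrow> None
     | Some (q', w) \<Rightarrow> (case run d q' u of None \<Rightarrow> None
         | Some (q'', w') \<Rightarrow> Some (q'', w @ w')))"

definition sem :: "('s, 'a, 'b) transducer \<Rightarrow> 'a list \<Rightarrow> 'b list option" where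
  "sem M u = (case run (trans M) (init M) u of None \<Rightarrow> None
     | Some (q, w) \<Rightarrow> (case final M q of None \<Rightarrow> None
         | Some z \<Rightarrow> Some (init_out M @ w @ z)))"

definition compatible :: "('s, 'a, 'b) transducer \<Rightarrow> 'a list set \<Rightarrow> 'a list set \<Rightarrow> ('a list \<Rightarrow> 'b tval) \<Rightarrow> bool" where
  "compatible M P S T \<longleftrightarrow> (\<forall>x\<in>tdom P S.
      (\<forall>w. T x = Out w \<longrightarrow> sem M x = Some w) \<and> (T x = Bot \<longrightarrow> sem M x = None))"

definition result_transducer ::
  "'a list set \<Rightarrow> 'a list set \<Rightarrow> ('a list \<Rightarrow> 'b tval)
     \<Rightarrow> ('a list \<times> 'a list) set \<Rightarrow> ('a list \<Rightarrow> 'b list option) \<Rightarrow> ('a list set, 'a, 'b) transducer" where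
  "result_transducer P S T R f =
    \<lparr> states = {R `` {u} | u. u \<in> dom f},
      init = R `` {[]},
      init_out = the (f []),
      trans = (\<lambda>q a. if \<exists>u. u \<in> dom f \<and> u @ [a] \<in> dom f \<and> R `` {u} = q
                 then (let u = (SOME u. u \<in> dom f \<and> u @ [a] \<in> dom f \<and> R `` {u} = q)
                       in Some (R `` {u @ [a]}, lquot (the (f u)) (the (f (u @ [a])))))
                 else None),
      final = (\<lambda>q. if \<exists>u w. u \<in> PT P S \<and> T u = Out w \<and> R `` {u} = q
                 then (let u = (SOME u. u \<in> PT P S \<and> (\<exists>w. T u = Out w) \<and> R `` {u} = q)
                       in (case T u of Out w \<Rightarrow> Some (lquot (the (f u)) w) | _ \<Rightarrow> None))
                 else None) \<rparr>"

end

theory Submission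
  imports Defs
begin

text \<open>Compatibility holds for every merging map, minimal or not. The state reached on a word
  x \<in> dom f is the class of x, and the accumulated output telescopes to f([])\<inverse>f(x);
  the final output of that class is f(x)\<inverse>T(x) by condition 5, which is independent of the
  representative chosen. Conversely, condition 5 forbids an output-carrying word in the class of a
  word u with T(u) = \<bottom>, so such a class is not final.\<close>

lemma prefix_append_lquot: "prefix a b \<Longrightarrow> a @ lquot a b = b"
  unfolding lquot_def prefix_def by auto

lemma lquot_append_lquot: "prefix a b \<Longrightarrow> prefix b c \<Longrightarrow> lquot a b @ lquot b c = lquot a c"
  unfolding lquot_def prefix_def by auto

lemma run_snoc:
  "run d q (x @ [a]) = (case run d q x of None \<Rightarrow> None
     | Some (q', w) \<Rightarrow> (case d q' a of None \<Rightarrow> None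
         | Some (q'', w') \<Rightarrow> Some (q'', w @ w')))"
  by (induction x arbitrary: q) (auto split: option.splits)

lemma PT_prefixD:
  assumes "x @ y \<in> PT P S"
  shows "x \<in> PT P S"
proof -
  obtain v where "x @ (y @ v) \<in> tdom P S" using assms unfolding PT_def by auto
  then show ?thesis unfolding PT_def by blast
qed

lemma tdom_subset_PT: "tdom P S \<subseteq> PT P S"
proof
  fix x
  assume "x \<in> tdom P S"
  then have "x @ [] \<in> tdom P S" by simp
  then show "x \<in> PT P S" unfolding PT_def by blast
qed

context
  fixes P S T R f
  assumes mm: "merging_map P S T R f"
begin

lemma merging_map_equiv: "equiv (PT P S) R"
  using mm unfolding merging_map_def by (elim conjE) assumption

lemma merging_map_dom: "dom f \<subseteq> PT P S"
  using mm unfolding merging_map_def by (elim conjE) assumption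

lemma merging_map_dom_class:
  assumes "u \<in> PT P S" "u' \<in> PT P S" "(u, u') \<in> R"
  shows "u \<in> dom f \<longleftrightarrow> u' \<in> dom f"
proof -
  have c1: "\<forall>u\<in>PT P S. \<forall>u'\<in>PT P S. f u = None \<longrightarrow> ((u, u') \<in> R \<longleftrightarrow> f u' = None)"
    using mm unfolding merging_map_def by (elim conjE) assumption
  have "(u', u) \<in> R" using assms(3) merging_map_equiv by (auto simp: equiv_def dest: symD)
  then show ?thesis using c1 assms unfolding domIff by metis
qed

lemma merging_map_output_prefix:
  assumes "u \<in> PT P S" "T (u @ v) = Out w" shows "u \<in> dom f \<and> prefix (the (f u)) w"
proof -
  have "\<forall>u\<in>PT P S. \<forall>v w. T (u @ v) = Out w \<longrightarrow> (\<exists>y. f u = Some y \<and> prefix y w)"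
    using mm unfolding merging_map_def by (elim conjE) assumption
  then show ?thesis using assms by fastforce
qed

lemma merging_map_snoc_prefix:
  assumes "u @ [a] \<in> dom f" shows "u \<in> dom f \<and> prefix (the (f u)) (the (f (u @ [a])))"
proof -
  have "\<forall>u\<in>PT P S. \<forall>a. f (u @ [a]) \<noteq> None \<longrightarrow> (\<exists>y. f u = Some y \<and> prefix y (the (f (u @ [a]))))"
    using mm unfolding merging_map_def by (elim conjE) assumption
  moreover have "u \<in> PT P S" using assms merging_map_dom PT_prefixD by blast
  ultimately show ?thesis using assms by fastforce
qed

lemma merging_map_snoc_congruent:
  assumes "u \<in> dom f" "(u, u') \<in> R" "u @ [a] \<in> PT P S" "u' @ [a] \<in> PT P S"
  shows "(u @ [a], u' @ [a]) \<in> R"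
    and "u @ [a] \<in> dom f \<Longrightarrow>
      lquot (the (f u)) (the (f (u @ [a]))) = lquot (the (f u')) (the (f (u' @ [a])))"
proof -
  have "\<forall>u\<in>PT P S. \<forall>u'\<in>PT P S. \<forall>a. f u \<noteq> None \<and> (u, u') \<in> R
        \<and> u @ [a] \<in> PT P S \<and> u' @ [a] \<in> PT P S \<longrightarrow>
        (u @ [a], u' @ [a]) \<in> R
        \<and> (f (u @ [a]) \<noteq> None \<longrightarrow>
             lquot (the (f u)) (the (f (u @ [a]))) = lquot (the (f u')) (the (f (u' @ [a]))))"
    using mm unfolding merging_map_def by (elim conjE) assumption
  moreover have "u \<in> PT P S" "u' \<in> PT P S" using assms PT_prefixD by blast+
  ultimately show "(u @ [a], u' @ [a]) \<in> R"
    and "u @ [a] \<in> dom f \<Longrightarrow>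
      lquot (the (f u)) (the (f (u @ [a]))) = lquot (the (f u')) (the (f (u' @ [a])))"
    using assms by blast+
qed

lemma merging_map_final_congruent:
  assumes "u \<in> PT P S" "u' \<in> PT P S" "(u, u') \<in> R" "T u = Out w"
  shows "T u' \<noteq> Bot" and "T u' = Out w' \<Longrightarrow> lquot (the (f u)) w = lquot (the (f u')) w'"
proof -
  have "\<forall>u\<in>PT P S. \<forall>u'\<in>PT P S. \<forall>w. T u = Out w \<and> (u, u') \<in> R \<longrightarrow>
        T u' \<noteq> Bot \<and> (\<forall>w'. T u' = Out w' \<longrightarrow> lquot (the (f u)) w = lquot (the (f u')) w')"
    using mm unfolding merging_map_def by (elim conjE) assumption
  then show "T u' \<noteq> Bot" and "T u' = Out w' \<Longrightarrow> lquot (the (f u)) w = lquot (the (f u')) w'"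
    using assms by blast+
qed

lemma merging_map_class_eq_iff:
  "u \<in> PT P S \<Longrightarrow> x \<in> PT P S \<Longrightarrow> R `` {u} = R `` {x} \<longleftrightarrow> (u, x) \<in> R"
  using merging_map_equiv by (simp add: equiv_class_eq_iff)

abbreviation "M \<equiv> result_transducer P S T R f"

lemma result_transducer_trans:
  assumes ya: "y @ [a] \<in> PT P S"
  shows "trans M (R `` {y}) a =
    (if y \<in> dom f \<and> y @ [a] \<in> dom f
     then Some (R `` {y @ [a]}, lquot (the (f y)) (the (f (y @ [a])))) else None)"
proof -
  have y: "y \<in> PT P S" using ya PT_prefixD by blast
  let ?Q = "\<lambda>u. u \<in> dom f \<and> u @ [a] \<in> dom f \<and> R `` {u} = R `` {y}"
  show ?thesis
  proof (cases "\<exists>u. ?Q u")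
    case True
    define u where "u = (SOME u. ?Q u)"
    have Qu: "?Q u" unfolding u_def using someI_ex[OF True] .
    then have u: "u \<in> PT P S" "u @ [a] \<in> PT P S" using merging_map_dom by auto
    have uy: "(u, y) \<in> R" using Qu u y merging_map_class_eq_iff by blast
    have "y \<in> dom f" using merging_map_dom_class[OF u(1) y uy] Qu by blast
    moreover have uaya: "(u @ [a], y @ [a]) \<in> R"
      using merging_map_snoc_congruent(1) Qu uy u(2) ya by blast
    moreover have "y @ [a] \<in> dom f" using merging_map_dom_class[OF u(2) ya uaya] Qu by blast
    moreover have "R `` {u @ [a]} = R `` {y @ [a]}"
      using equiv_class_eq[OF merging_map_equiv uaya] .
    moreover have "lquot (the (f u)) (the (f (u @ [a]))) = lquot (the (f y)) (the (f (y @ [a])))"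
      using merging_map_snoc_congruent(2) Qu uy u(2) ya by blast
    moreover have "trans M (R `` {y}) a = Some (R `` {u @ [a]}, lquot (the (f u)) (the (f (u @ [a]))))"
      unfolding result_transducer_def transducer.select_convs
      by (simp only: if_P[OF True] Let_def u_def[symmetric])
    ultimately show ?thesis by simp
  next
    case False
    then have "\<not> (y \<in> dom f \<and> y @ [a] \<in> dom f)" by blast
    moreover have "trans M (R `` {y}) a = None"
      unfolding result_transducer_def transducer.select_convs by (simp only: if_not_P[OF False])
    ultimately show ?thesis by simp
  qed
qed

lemma result_transducer_final_Out:
  assumes x: "x \<in> PT P S" and Tx: "T x = Out w"
  shows "final M (R `` {x}) = Some (lquot (the (f x)) w)"
proof -
  let ?Q = "\<lambda>u. u \<in> PT P S \<and> (\<exists>w. T u = Out w) \<and> R `` {u} = R `` {x}"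
  have ex: "\<exists>u. ?Q u" using x Tx by blast
  define u where "u = (SOME u. ?Q u)"
  have Qu: "?Q u" unfolding u_def using someI_ex[OF ex] .
  then obtain w' where w': "T u = Out w'" by blast
  have "(u, x) \<in> R" using Qu x merging_map_class_eq_iff by blast
  then have congr: "lquot (the (f u)) w' = lquot (the (f x)) w"
    using merging_map_final_congruent(2) Qu x w' Tx by blast
  have ex': "\<exists>u w. u \<in> PT P S \<and> T u = Out w \<and> R `` {u} = R `` {x}" using x Tx by blast
  have "final M (R `` {x}) = (case T u of Out w \<Rightarrow> Some (lquot (the (f u)) w) | _ \<Rightarrow> None)"
    unfolding result_transducer_def transducer.select_convs
    by (simp only: if_P[OF ex'] Let_def u_def[symmetric])
  then show ?thesis using w' congr by simp
qed

lemma result_transducer_final_Bot: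
  assumes x: "x \<in> PT P S" and Tx: "T x = Bot"
  shows "final M (R `` {x}) = None"
proof -
  have "\<not> (\<exists>u w. u \<in> PT P S \<and> T u = Out w \<and> R `` {u} = R `` {x})"
    using merging_map_final_congruent(1) x Tx merging_map_class_eq_iff by blast
  then show ?thesis
    unfolding result_transducer_def transducer.select_convs by (simp only: if_False)
qed

lemma run_result_transducer_state:
  "x \<in> PT P S \<Longrightarrow> run (trans M) (R `` {[]}) x = Some (q, w) \<Longrightarrow> q = R `` {x}"
proof (induction x arbitrary: q w rule: rev_induct)
  case (snoc a x)
  obtain q' w' where run: "run (trans M) (R `` {[]}) x = Some (q', w')"
    using snoc.prems(2) by (auto simp: run_snoc split: option.splits)
  have q': "q' = R `` {x}" using snoc.IH[OF PT_prefixD[OF snoc.prems(1)] run] .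
  obtain w'' where "trans M q' a = Some (q, w'')"
    using snoc.prems(2) run by (auto simp: run_snoc split: option.splits)
  then show ?case
    using result_transducer_trans[OF snoc.prems(1)] q' by (simp split: if_splits)
qed simp

lemma run_result_transducer:
  "x \<in> dom f \<Longrightarrow> run (trans M) (R `` {[]}) x = Some (R `` {x}, lquot (the (f [])) (the (f x)))
     \<and> prefix (the (f [])) (the (f x))"
proof (induction x rule: rev_induct)
  case Nil
  then show ?case by (simp add: lquot_def)
next
  case (snoc a x)
  have x: "x \<in> dom f" and px: "prefix (the (f x)) (the (f (x @ [a])))"
    using merging_map_snoc_prefix[OF snoc.prems] by blast+
  have run: "run (trans M) (R `` {[]}) x = Some (R `` {x}, lquot (the (f [])) (the (f x)))"
    and p0: "prefix (the (f [])) (the (f x))"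
    using snoc.IH[OF x] by blast+
  have "x @ [a] \<in> PT P S" using snoc.prems merging_map_dom by blast
  then have "trans M (R `` {x}) a = Some (R `` {x @ [a]}, lquot (the (f x)) (the (f (x @ [a]))))"
    using result_transducer_trans x snoc.prems by simp
  then have "run (trans M) (R `` {[]}) (x @ [a]) = Some (R `` {x @ [a]},
      lquot (the (f [])) (the (f x)) @ lquot (the (f x)) (the (f (x @ [a]))))"
    using run by (simp add: run_snoc)
  then show ?case using lquot_append_lquot[OF p0 px] prefix_order.trans[OF p0 px] by simp
qed

lemma sem_result_transducer_Out:
  assumes x: "x \<in> PT P S" and Tx: "T x = Out w"
  shows "sem M x = Some w"
proof -
  have fx: "x \<in> dom f" "prefix (the (f x)) w"
    using merging_map_output_prefix[of x "[]"] x Tx by auto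
  have run: "run (trans M) (R `` {[]}) x = Some (R `` {x}, lquot (the (f [])) (the (f x)))"
    and f0: "prefix (the (f [])) (the (f x))"
    using run_result_transducer[OF fx(1)] by blast+
  have "the (f []) @ lquot (the (f [])) (the (f x)) @ lquot (the (f x)) w = w"
    using lquot_append_lquot[OF f0 fx(2)] prefix_append_lquot[OF prefix_order.trans[OF f0 fx(2)]]
    by simp
  then show ?thesis
    using run result_transducer_final_Out[OF x Tx]
    unfolding sem_def by (simp add: result_transducer_def)
qed

lemma sem_result_transducer_Bot:
  assumes x: "x \<in> PT P S" and Tx: "T x = Bot"
  shows "sem M x = None"
proof (rule ccontr)
  assume "sem M x \<noteq> None"
  then obtain q w z where "run (trans M) (R `` {[]}) x = Some (q, w)" and "final M q = Some z"
    unfolding sem_def by (auto simp: result_transducer_def split: option.splits)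
  then show False
    using run_result_transducer_state x result_transducer_final_Bot[OF x Tx] by simp
qed

end

theorem lemma1:
  fixes P S :: "('a::finite) list set"
    and T :: "'a list \<Rightarrow> ('b::finite) tval"
    and R :: "('a list \<times> 'a list) set"
    and f :: "'a list \<Rightarrow> 'b list option"
  assumes "obs_table P S T"
    and "merging_map P S T R f"
    and "\<forall>R' f'. merging_map P S T R' f' \<longrightarrow> \<not> mm_size P S R' f' < mm_size P S R f"
  shows "compatible (result_transducer P S T R f) P S T"
  unfolding compatible_def
proof (intro ballI conjI allI impI)
  fix x w
  assume "x \<in> tdom P S" "T x = Out w"
  then show "sem (result_transducer P S T R f) x = Some w"
    using sem_result_transducer_Out[OF assms(2)] tdom_subset_PT by blast
next
  fix x
  assume "x \<in> tdom P S" "T x = Bot"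
  then show "sem (result_transducer P S T R f) x = None"
    using sem_result_transducer_Bot[OF assms(2)] tdom_subset_PT by blast
qed

end
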